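(* Let $\mathcal H$ be a real Hilbert space and $k\ge1$. If a nonzero continuous symmetric $k$-linear form $T$ on $\mathcal H$ attains its norm at $(\mathbf{x}_1,\ldots,\mathbf{x}_k)$, where $\mathbf{x}_1,\ldots,\mathbf{x}_k$ are norm one vectors, then $\dim(\operatorname{span}\{\mathbf{x}_1,\ldots,\mathbf{x}_k\})\le 2$.
   Context: $\|T\|=\sup\{|T(\mathbf{w}_1,\ldots,\mathbf{w}_k)|:\|\mathbf{w}_i\|\le1\}$, and $T$ attains its norm at $(\mathbf{x}_1,\ldots,\mathbf{x}_k)$ if $|T(\mathbf{x}_1,\ldots,\mathbf{x}_k)|=\|T\|$. *)

theory Defs
  imports "HOL-Analysis.Analysis" "HOL-Combinatorics.Permutations"
begin

text \<open>A k-linear form on a real inner product space 'a is modelled as a real-valued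
function on the extensional function space PiE {..<k} (\<lambda>_. UNIV), i.e. on k-tuples
(w 0, ..., w (k-1)) of vectors.\<close>

definition ktuples :: "nat \<Rightarrow> (nat \<Rightarrow> 'a) set" where
  "ktuples k = PiE {..<k} (\<lambda>_. UNIV)"

definition multilinear_form :: "nat \<Rightarrow> ((nat \<Rightarrow> 'a::real_vector) \<Rightarrow> real) \<Rightarrow> bool" where
  "multilinear_form k T \<longleftrightarrow>
     (\<forall>w\<in>ktuples k. \<forall>i<k. linear (\<lambda>v. T (w(i := v))))"

definition symmetric_form :: "nat \<Rightarrow> ((nat \<Rightarrow> 'a) \<Rightarrow> real) \<Rightarrow> bool" where
  "symmetric_form k T \<longleftrightarrow>
     (\<forall>w\<in>ktuples k. \<forall>p. p permutes {..<k} \<longrightarrow> T (w \<circ> p) = T w)"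

definition form_norm :: "nat \<Rightarrow> ((nat \<Rightarrow> 'a::real_normed_vector) \<Rightarrow> real) \<Rightarrow> real" where
  "form_norm k T = Sup {\<bar>T w\<bar> | w. w \<in> ktuples k \<and> (\<forall>i<k. norm (w i) \<le> 1)}"

definition attains_norm_at :: "nat \<Rightarrow> ((nat \<Rightarrow> 'a::real_normed_vector) \<Rightarrow> real) \<Rightarrow> (nat \<Rightarrow> 'a) \<Rightarrow> bool" where
  "attains_norm_at k T x \<longleftrightarrow> x \<in> ktuples k \<and> \<bar>T x\<bar> = form_norm k T"

end

theory Submission
  imports Defs
begin

text \<open>Freezing all but three arguments of \<open>T\<close> at the norming tuple and dividing by
\<open>T x\<close> gives a symmetric trilinear form \<open>G\<close> of norm at most one with
\<open>G (x i) (x j) (x l) = 1\<close>. For such a norming triple \<open>(a, b, c)\<close> of unit vectors,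
first-order optimality gives \<open>G u b c = inner a u\<close>. Applied to the triples obtained from
\<open>x, y, z\<close> by permutation and by replacing \<open>x, y\<close> with their normalised sum, this determines
\<open>G u s s = inner V u\<close> for \<open>s = x + y + z\<close> and an explicit combination \<open>V\<close> of
\<open>x, y, z\<close>. The bound \<open>norm V \<le> (norm s)\<^sup>2\<close> then says that the Gram determinant
of \<open>x, y, z\<close> is nonpositive, hence zero: \<open>z\<close> lies in the span of \<open>x\<close> and \<open>y\<close>
whenever these are independent.\<close>

lemma inner_square_less_1_if_notin_span:
  assumes "norm x = 1" "norm y = 1" "y \<notin> span {x}"
  shows "(inner x y)\<^sup>2 < 1"
proof -
  have "inner (y - inner x y *\<^sub>R x) (y - inner x y *\<^sub>R x) = 1 - (inner x y)\<^sup>2"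
    using assms by (simp add: inner_diff_left inner_diff_right norm_eq_1 inner_commute
        power2_eq_square)
  moreover have "y - inner x y *\<^sub>R x \<noteq> 0"
    using assms(3) by (metis eq_iff_diff_eq_0 insertI1 span_base span_scale)
  ultimately show ?thesis
    by (metis inner_gt_zero_iff diff_gt_0_iff_gt)
qed

text \<open>The right-hand side is three times the Gram determinant of \<open>x, y, z\<close>.\<close>
lemma unit_triple_weighted_sum_identity:
  fixes x y z :: "'a::real_inner"
  assumes "norm x = 1" "norm y = 1" "norm z = 1"
  defines "c1 \<equiv> inner y z" and "c2 \<equiv> inner x z" and "c3 \<equiv> inner x y"
  defines "V \<equiv> (c1 + 2) *\<^sub>R x + (c2 + 2) *\<^sub>R y + (c3 + 2) *\<^sub>R z" and "s \<equiv> x + y + z"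
  shows "inner V V - (inner s s)\<^sup>2 = 3 * (1 - c1\<^sup>2 - c2\<^sup>2 - c3\<^sup>2 + 2 * c1 * c2 * c3)"
  using assms(1-3)
  by (simp add: V_def s_def inner_add_left inner_add_right norm_eq_1 inner_commute
      c1_def[symmetric] c2_def[symmetric] c3_def[symmetric])
    (simp add: c1_def c2_def c3_def inner_commute power2_eq_square algebra_simps)

text \<open>Here \<open>w\<close> is \<open>1 - c3\<^sup>2\<close> times the component of \<open>z\<close> orthogonal to \<open>x\<close> and \<open>y\<close>.\<close>
lemma unit_triple_gram_residual:
  fixes x y z :: "'a::real_inner"
  assumes "norm x = 1" "norm y = 1" "norm z = 1"
  defines "c1 \<equiv> inner y z" and "c2 \<equiv> inner x z" and "c3 \<equiv> inner x y"
  defines "w \<equiv> (1 - c3\<^sup>2) *\<^sub>R z - (c2 - c1 * c3) *\<^sub>R x - (c1 - c2 * c3) *\<^sub>R y"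
  shows "inner w w = (1 - c3\<^sup>2) * (1 - c1\<^sup>2 - c2\<^sup>2 - c3\<^sup>2 + 2 * c1 * c2 * c3)"
  using assms(1-3)
  by (simp add: w_def inner_add_left inner_add_right inner_diff_left inner_diff_right
      norm_eq_1 inner_commute c1_def[symmetric] c2_def[symmetric] c3_def[symmetric])
    (simp add: c1_def c2_def c3_def inner_commute power2_eq_square algebra_simps)

locale contractive_symmetric_trilinear =
  fixes G :: "'a::real_inner \<Rightarrow> 'a \<Rightarrow> 'a \<Rightarrow> real"
  assumes linear_first: "linear (\<lambda>u. G u v w)"
    and swap12: "G u v w = G v u w"
    and swap23: "G u v w = G u w v"
    and unit_bound: "norm u = 1 \<Longrightarrow> norm v = 1 \<Longrightarrow> norm w = 1 \<Longrightarrow> \<bar>G u v w\<bar> \<le> 1"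
begin

lemma add_first: "G (a + b) v w = G a v w + G b v w"
  using linear_add[OF linear_first] .

lemma add_second: "G u (a + b) w = G u a w + G u b w"
  by (metis add_first swap12)

lemma add_third: "G u v (a + b) = G u v a + G u v b"
  by (metis add_second swap23)

lemma scale_first: "G (r *\<^sub>R a) v w = r * G a v w"
  using linear_scale[OF linear_first] by simp

lemma scale_second: "G u (r *\<^sub>R a) w = r * G u a w"
  by (metis scale_first swap12)

lemma scale_third: "G u v (r *\<^sub>R a) = r * G u v a"
  by (metis scale_second swap23)

lemmas trilinear_simps = add_first add_second add_third scale_first scale_second scale_third

lemma abs_le_norm_mult: "\<bar>G u v w\<bar> \<le> norm u * norm v * norm w"
proof (cases "u = 0 \<or> v = 0 \<or> w = 0")
  case True
  then show ?thesis
    using scale_first[of 0 0] scale_second[of _ 0 0] scale_third[of _ _ 0 0] by auto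
next
  case False
  let ?u = "sgn u" and ?v = "sgn v" and ?w = "sgn w"
  have "G u v w = norm u * norm v * norm w * G ?u ?v ?w"
    using False by (simp add: sgn_div_norm trilinear_simps field_simps)
  moreover have "\<bar>G ?u ?v ?w\<bar> \<le> 1"
    using False by (intro unit_bound) (auto simp: norm_sgn)
  ultimately show ?thesis
    by (simp add: abs_mult mult_left_le)
qed

text \<open>Moving \<open>a\<close> along a direction \<open>v\<close> orthogonal to it changes its norm only to second
order, so the first-order change \<open>G v b c\<close> of the value must vanish.\<close>
lemma norming_gradient:
  assumes "norm a = 1" "norm b = 1" "norm c = 1" and abc: "G a b c = 1"
  shows "G u b c = inner a u"
proof -
  define v where "v = u - inner a u *\<^sub>R a"
  define g where "g = G v b c"
  define n where "n = (norm v)\<^sup>2"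
  define t where "t = g / (n + 1)"
  have aa: "inner a a = 1"
    using assms(1) by (simp add: norm_eq_1)
  have av: "inner a v = 0"
    by (simp add: v_def inner_diff_right aa)
  have vv: "inner v v = n"
    by (simp add: n_def power2_norm_eq_inner)
  have "G u b c = G (inner a u *\<^sub>R a + v) b c"
    by (simp add: v_def)
  also have "\<dots> = inner a u + g"
    using abc by (simp add: g_def trilinear_simps)
  moreover have "g = 0"
  proof (rule ccontr)
    assume "g \<noteq> 0"
    have "\<bar>1 + t * g\<bar> \<le> norm (a + t *\<^sub>R v)"
      using abs_le_norm_mult[of "a + t *\<^sub>R v" b c] assms abc by (simp add: g_def trilinear_simps)
    then have "(1 + t * g)\<^sup>2 \<le> (norm (a + t *\<^sub>R v))\<^sup>2"
      by (metis abs_le_square_iff abs_norm_cancel)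
    also have "\<dots> = inner (a + t *\<^sub>R v) (a + t *\<^sub>R v)"
      by (simp add: power2_norm_eq_inner)
    also have "\<dots> = 1 + t\<^sup>2 * n"
      using aa av vv by (simp add: inner_add_left inner_add_right inner_commute power2_eq_square)
    finally have "2 * (t * g) + (t * g)\<^sup>2 \<le> t\<^sup>2 * n"
      by (simp add: power2_eq_square algebra_simps)
    have "n \<ge> 0"
      by (simp add: n_def)
    have tg: "t * g > 0"
      using \<open>g \<noteq> 0\<close> \<open>n \<ge> 0\<close> by (simp add: t_def) (auto simp: field_simps zero_less_mult_iff)
    have "t\<^sup>2 * n = t * g * (n / (n + 1))"
      by (simp add: t_def power2_eq_square)
    also have "\<dots> < t * g"
      using tg \<open>n \<ge> 0\<close> by (simp add: field_simps)
    finally show False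
      using \<open>2 * (t * g) + (t * g)\<^sup>2 \<le> t\<^sup>2 * n\<close> tg
      by (smt (verit) zero_le_power2)
  qed
  ultimately show ?thesis
    by simp
qed

lemma norming_permute:
  assumes "G x y z = 1"
  shows "G y x z = 1" "G x z y = 1" "G z x y = 1" "G y z x = 1"
  using assms swap12 swap23 by metis+

text \<open>The normalised sum \<open>(x + y) / norm (x + y)\<close> forms, together with \<open>z\<close>, another
norming triple; comparing the two gradient formulas it yields gives the identity.\<close>
lemma norming_diagonal_pair:
  assumes x: "norm x = 1" and y: "norm y = 1" and z: "norm z = 1" and xyz: "G x y z = 1"
    and "x + y \<noteq> 0"
  shows "G u x x + G u y y = 2 * inner x y * inner z u"
proof -
  define m where "m = norm (x + y)"
  define a where "a = (1 / m) *\<^sub>R (x + y)"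
  have m2: "m\<^sup>2 = 2 + 2 * inner x y"
    using x y by (simp add: m_def power2_norm_eq_inner inner_add_left inner_add_right
        norm_eq_1 inner_commute)
  have "m > 0"
    using \<open>x + y \<noteq> 0\<close> by (simp add: m_def)
  have "norm a = 1"
    using \<open>x + y \<noteq> 0\<close> by (simp add: a_def m_def)
  have "G a a z = (G x x z + 2 * G x y z + G y y z) / m\<^sup>2"
    using \<open>m > 0\<close> by (simp add: a_def trilinear_simps power2_eq_square swap12[of y x] field_simps)
  also have "\<dots> = m\<^sup>2 / m\<^sup>2"
    using norming_gradient[OF y x z norming_permute(1)[OF xyz], of x]
      norming_gradient[OF x y z xyz, of y] xyz
    by (simp add: m2 inner_commute)
  also have "\<dots> = 1"
    using \<open>m > 0\<close> by simp
  finally have "G z a a = 1"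
    by (metis swap12 swap23)
  then have "G u a a = inner z u"
    using norming_gradient z \<open>norm a = 1\<close> by blast
  moreover have "G u a a = (G u x x + 2 * G u x y + G u y y) / m\<^sup>2"
    using \<open>m > 0\<close> by (simp add: a_def trilinear_simps power2_eq_square swap23[of u y x] field_simps)
  moreover have "G u x y = inner z u"
    using norming_gradient[OF z x y norming_permute(3)[OF xyz]] .
  ultimately have "G u x x + G u y y = (m\<^sup>2 - 2) * inner z u"
    using \<open>m > 0\<close> by (simp add: field_simps)
  then show ?thesis
    by (simp add: m2)
qed

lemma norming_triple_quadratic:
  assumes x: "norm x = 1" and y: "norm y = 1" and z: "norm z = 1" and xyz: "G x y z = 1"
    and "x + y \<noteq> 0" "x + z \<noteq> 0" "y + z \<noteq> 0"
  shows "G u (x + y + z) (x + y + z) =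
    inner ((inner y z + 2) *\<^sub>R x + (inner x z + 2) *\<^sub>R y + (inner x y + 2) *\<^sub>R z) u"
proof -
  have "G u x x + G u y y + G u z z =
      inner y z * inner x u + inner x z * inner y u + inner x y * inner z u"
    using norming_diagonal_pair[OF x y z xyz \<open>x + y \<noteq> 0\<close>, of u]
      norming_diagonal_pair[OF x z y norming_permute(2)[OF xyz] \<open>x + z \<noteq> 0\<close>, of u]
      norming_diagonal_pair[OF y z x norming_permute(4)[OF xyz] \<open>y + z \<noteq> 0\<close>, of u]
    by (simp add: inner_commute algebra_simps)
  moreover have "G u x z = inner y u" "G u y z = inner x u" "G u x y = inner z u"
    using norming_gradient[OF y x z norming_permute(1)[OF xyz]] norming_gradient[OF x y z xyz]
      norming_gradient[OF z x y norming_permute(3)[OF xyz]] by auto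
  ultimately show ?thesis
    by (simp add: trilinear_simps swap23[of u y x] swap23[of u z x] swap23[of u z y]
        inner_add_left algebra_simps)
qed

lemma norming_triple_in_span:
  assumes x: "norm x = 1" and y: "norm y = 1" and z: "norm z = 1" and xyz: "G x y z = 1"
    and y_x: "y \<notin> span {x}"
  shows "z \<in> span {x, y}"
proof (cases "x + z = 0 \<or> y + z = 0")
  case True
  then have "z = - x \<or> z = - y"
    by (auto simp: add_eq_0_iff2 add.commute)
  then show ?thesis
    by (auto intro: span_neg span_base)
next
  case False
  have "x + y \<noteq> 0"
    using y_x by (metis add_eq_0_iff2 add.commute insertI1 span_base span_neg)
  define c1 where "c1 = inner y z"
  define c2 where "c2 = inner x z"
  define c3 where "c3 = inner x y"
  define V where "V = (c1 + 2) *\<^sub>R x + (c2 + 2) *\<^sub>R y + (c3 + 2) *\<^sub>R z"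
  define s where "s = x + y + z"
  define w where "w = (1 - c3\<^sup>2) *\<^sub>R z - (c2 - c1 * c3) *\<^sub>R x - (c1 - c2 * c3) *\<^sub>R y"
  have "norm V * norm V = G V s s"
    using norming_triple_quadratic[OF x y z xyz \<open>x + y \<noteq> 0\<close>, of V] False
    by (simp add: V_def s_def c1_def c2_def c3_def flip: dot_square_norm power2_eq_square)
  also have "\<dots> \<le> norm V * (norm s)\<^sup>2"
    using abs_le_norm_mult[of V s s] by (simp add: power2_eq_square mult.assoc)
  finally have "norm V \<le> (norm s)\<^sup>2"
    by (cases "V = 0") auto
  then have "inner V V \<le> (inner s s)\<^sup>2"
    by (metis norm_ge_zero power_mono power2_norm_eq_inner)
  then have "1 - c1\<^sup>2 - c2\<^sup>2 - c3\<^sup>2 + 2 * c1 * c2 * c3 \<le> 0"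
    using unit_triple_weighted_sum_identity[OF x y z] by (simp add: V_def s_def c1_def c2_def c3_def)
  moreover have "c3\<^sup>2 < 1"
    using inner_square_less_1_if_notin_span[OF x y y_x] by (simp add: c3_def)
  ultimately have "inner w w \<le> 0"
    using unit_triple_gram_residual[OF x y z]
    by (simp add: w_def c1_def c2_def c3_def mult_nonneg_nonpos)
  then have "w = 0"
    by (metis inner_ge_zero order.antisym inner_eq_zero_iff)
  then have "(1 - c3\<^sup>2) *\<^sub>R z = (c2 - c1 * c3) *\<^sub>R x + (c1 - c2 * c3) *\<^sub>R y"
    by (simp add: w_def algebra_simps)
  moreover have "z = (1 / (1 - c3\<^sup>2)) *\<^sub>R ((1 - c3\<^sup>2) *\<^sub>R z)"
    using \<open>c3\<^sup>2 < 1\<close> by simp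
  ultimately have "z = (1 / (1 - c3\<^sup>2)) *\<^sub>R ((c2 - c1 * c3) *\<^sub>R x + (c1 - c2 * c3) *\<^sub>R y)"
    by simp
  then show ?thesis
    by (simp add: span_add span_base span_scale)
qed

end

definition scale_args :: "nat \<Rightarrow> real \<Rightarrow> (nat \<Rightarrow> 'a::real_vector) \<Rightarrow> nat \<Rightarrow> 'a" where
  "scale_args m c w = (\<lambda>i. if i < m then c *\<^sub>R w i else w i)"

lemma ktuples_fun_upd: "w \<in> ktuples k \<Longrightarrow> i < k \<Longrightarrow> w(i := v) \<in> ktuples k"
  by (auto simp: ktuples_def PiE_iff extensional_def)

lemma ktuples_undefined: "w \<in> ktuples k \<Longrightarrow> \<not> i < k \<Longrightarrow> w i = undefined"
  by (auto simp: ktuples_def PiE_iff extensional_def)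

lemma scale_args_in_ktuples: "w \<in> ktuples k \<Longrightarrow> m \<le> k \<Longrightarrow> scale_args m c w \<in> ktuples k"
  by (auto simp: scale_args_def ktuples_def PiE_iff extensional_def)

lemma multilinear_form_linear:
  "multilinear_form k T \<Longrightarrow> w \<in> ktuples k \<Longrightarrow> i < k \<Longrightarrow> linear (\<lambda>v. T (w(i := v)))"
  by (simp add: multilinear_form_def)

lemma multilinear_form_scale_args:
  assumes T: "multilinear_form k T" and w: "w \<in> ktuples k"
  shows "m \<le> k \<Longrightarrow> T (scale_args m c w) = c ^ m * T w"
proof (induction m)
  case 0
  then show ?case
    by (simp add: scale_args_def)
next
  case (Suc m)
  have "scale_args (Suc m) c w = (scale_args m c w)(m := c *\<^sub>R w m)"
    by (auto simp: scale_args_def)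
  then have "T (scale_args (Suc m) c w) = c * T ((scale_args m c w)(m := w m))"
    using linear_scale[OF multilinear_form_linear[OF T scale_args_in_ktuples[OF w]]] Suc.prems
    by simp
  also have "(scale_args m c w)(m := w m) = scale_args m c w"
    by (auto simp: scale_args_def)
  finally show ?case
    using Suc by simp
qed

lemma symmetric_form_swap:
  assumes "symmetric_form k T" "w \<in> ktuples k" "a < k" "b < k"
  shows "T (w \<circ> Transposition.transpose a b) = T w"
  using assms permutes_swap_id[of a "{..<k}" b] by (simp add: symmetric_form_def)

text \<open>Shrinking a sequence of arguments from the unit ball by the factor \<open>1 / (n + 1)\<close> makes
it converge to the zero tuple, while multilinearity multiplies the values of \<open>T\<close> by
\<open>1 / (n + 1) ^ k\<close>; so unbounded values on the unit ball contradict continuity at zero.\<close>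
lemma multilinear_form_bounded:
  fixes T :: "(nat \<Rightarrow> 'a::real_normed_vector) \<Rightarrow> real"
  assumes k: "k \<ge> 1" and T: "multilinear_form k T" and cont: "continuous_on (ktuples k) T"
  shows "bdd_above {\<bar>T w\<bar> | w. w \<in> ktuples k \<and> (\<forall>i<k. norm (w i) \<le> 1)}"
proof (rule ccontr)
  assume "\<not> ?thesis"
  then have "\<forall>n::nat. \<exists>w\<in>ktuples k. (\<forall>i<k. norm (w i) \<le> 1) \<and> real (Suc n) ^ k < \<bar>T w\<bar>"
    by (auto simp: bdd_above_def not_le)
  then obtain w where w: "\<And>n. w n \<in> ktuples k" "\<And>n i. i < k \<Longrightarrow> norm (w n i) \<le> 1"
      and big: "\<And>n. real (Suc n) ^ k < \<bar>T (w n)\<bar>"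
    by metis
  define u where "u n = scale_args k (inverse (real (Suc n))) (w n)" for n
  define z where "z = scale_args k 0 (w 0)"
  have u_in: "u n \<in> ktuples k" for n
    using scale_args_in_ktuples[OF w(1)] by (simp add: u_def)
  have "(\<lambda>n. u n i) \<longlonglongrightarrow> z i" for i
  proof (cases "i < k")
    case True
    have "norm (u n i) \<le> inverse (real (Suc n))" for n
      using w(2)[OF True, of n] True by (simp add: u_def scale_args_def mult_left_le)
    then have "(\<lambda>n. u n i) \<longlonglongrightarrow> 0"
      by (intro Lim_null_comparison[OF _ LIMSEQ_inverse_real_of_nat]) simp
    then show ?thesis
      using True by (simp add: z_def scale_args_def)
  next
    case False
    then show ?thesis
      using ktuples_undefined[OF w(1) False] by (simp add: u_def z_def scale_args_def)
  qed
  then have "u \<longlonglongrightarrow> z"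
    using limitin_componentwise[of "\<lambda>_. euclidean" UNIV u z sequentially]
    by (simp add: euclidean_product_topology)
  then have "(\<lambda>n. T (u n)) \<longlonglongrightarrow> T z"
    by (intro continuous_on_tendsto_compose[OF cont]) (auto simp: u_in z_def scale_args_in_ktuples w)
  moreover have "T z = 0"
    using multilinear_form_scale_args[OF T w(1)] k by (simp add: z_def)
  ultimately obtain n where "\<bar>T (u n)\<bar> < 1"
    by (metis (no_types, lifting) LIMSEQ_D dist_real_def diff_zero real_norm_def zero_less_one
        order_refl)
  moreover have "\<bar>T (u n)\<bar> = \<bar>T (w n)\<bar> / real (Suc n) ^ k"
    using multilinear_form_scale_args[OF T w(1)]
    by (simp add: u_def abs_mult power_inverse divide_inverse_commute)
  ultimately show False
    using big[of n] by (simp add: field_simps)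
qed

lemma abs_le_form_norm:
  fixes T :: "(nat \<Rightarrow> 'a::real_normed_vector) \<Rightarrow> real"
  assumes "k \<ge> 1" "multilinear_form k T" "continuous_on (ktuples k) T"
    and "w \<in> ktuples k" "\<forall>i<k. norm (w i) \<le> 1"
  shows "\<bar>T w\<bar> \<le> form_norm k T"
  unfolding form_norm_def using assms by (intro cSup_upper multilinear_form_bounded) auto

lemma attains_norm_at_nonzero:
  fixes T :: "(nat \<Rightarrow> 'a::real_normed_vector) \<Rightarrow> real"
  assumes k: "k \<ge> 1" and T: "multilinear_form k T" and cont: "continuous_on (ktuples k) T"
    and "\<exists>w\<in>ktuples k. T w \<noteq> 0" and x: "attains_norm_at k T x"
  shows "T x \<noteq> 0"
proof
  assume "T x = 0"
  obtain w where w: "w \<in> ktuples k" "T w \<noteq> 0"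
    using assms(4) by blast
  define c where "c = 1 / (1 + (\<Sum>i<k. norm (w i)))"
  have "c > 0"
    by (simp add: c_def add_pos_nonneg sum_nonneg)
  have "norm (c *\<^sub>R w i) \<le> 1" if "i < k" for i
  proof -
    have "norm (w i) \<le> (\<Sum>i<k. norm (w i))"
      using that by (intro member_le_sum) auto
    then show ?thesis
      using \<open>c > 0\<close> by (simp add: c_def field_simps)
  qed
  then have "\<bar>T (scale_args k c w)\<bar> \<le> form_norm k T"
    by (intro abs_le_form_norm[OF k T cont] scale_args_in_ktuples w) (auto simp: scale_args_def)
  also have "form_norm k T = 0"
    using x \<open>T x = 0\<close> by (simp add: attains_norm_at_def)
  finally show False
    using multilinear_form_scale_args[OF T w(1) order_refl] \<open>c > 0\<close> w(2) by simp
qed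

lemma attains_norm_at_slice_contractive:
  fixes T :: "(nat \<Rightarrow> 'a::real_inner) \<Rightarrow> real"
  assumes k: "k \<ge> 1" and T: "multilinear_form k T" and sym: "symmetric_form k T"
    and cont: "continuous_on (ktuples k) T"
    and unit: "\<forall>i<k. norm (x i) = 1" and x: "attains_norm_at k T x"
    and ijl: "i < k" "j < k" "l < k" "i \<noteq> j" "i \<noteq> l" "j \<noteq> l"
  shows "contractive_symmetric_trilinear (\<lambda>u v t. T (x(i := u, j := v, l := t)) / T x)"
proof (rule contractive_symmetric_trilinear.intro)
  have x_in: "x \<in> ktuples k"
    using x by (simp add: attains_norm_at_def)
  have slice_in: "x(i := u, j := v, l := t) \<in> ktuples k" for u v t
    using x_in ijl by (intro ktuples_fun_upd) auto
  fix u v t :: 'a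
  have "linear (\<lambda>u. T ((x(j := v, l := t))(i := u)))"
    using x_in ijl by (intro multilinear_form_linear[OF T] ktuples_fun_upd) auto
  moreover have "(x(j := v, l := t))(i := u) = x(i := u, j := v, l := t)" for u
    using ijl by (auto simp: fun_upd_twist)
  ultimately have "linear (\<lambda>u. T (x(i := u, j := v, l := t)))"
    by simp
  from linear_compose[OF this bounded_linear.linear[OF bounded_linear_divide[of "T x"]]]
  show "linear (\<lambda>u. T (x(i := u, j := v, l := t)) / T x)"
    by (simp add: o_def)
  have "x(i := v, j := u, l := t) = x(i := u, j := v, l := t) \<circ> Transposition.transpose i j"
    using ijl by (auto simp: Transposition.transpose_def)
  then show "T (x(i := u, j := v, l := t)) / T x = T (x(i := v, j := u, l := t)) / T x"
    using symmetric_form_swap[OF sym slice_in \<open>i < k\<close> \<open>j < k\<close>] by simp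
  have "x(i := u, j := t, l := v) = x(i := u, j := v, l := t) \<circ> Transposition.transpose j l"
    using ijl by (auto simp: Transposition.transpose_def)
  then show "T (x(i := u, j := v, l := t)) / T x = T (x(i := u, j := t, l := v)) / T x"
    using symmetric_form_swap[OF sym slice_in \<open>j < k\<close> \<open>l < k\<close>] by simp
  assume "norm u = 1" "norm v = 1" "norm t = 1"
  then have "\<bar>T (x(i := u, j := v, l := t))\<bar> \<le> \<bar>T x\<bar>"
    using abs_le_form_norm[OF k T cont slice_in] unit x by (simp add: attains_norm_at_def)
  then show "\<bar>T (x(i := u, j := v, l := t)) / T x\<bar> \<le> 1"
    by (cases "T x = 0") (simp_all add: abs_divide)
qed

lemma attains_norm_at_in_span:
  fixes T :: "(nat \<Rightarrow> 'a::real_inner) \<Rightarrow> real"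
  assumes k: "k \<ge> 1" and T: "multilinear_form k T" and sym: "symmetric_form k T"
    and cont: "continuous_on (ktuples k) T" and nonzero: "\<exists>w\<in>ktuples k. T w \<noteq> 0"
    and unit: "\<forall>i<k. norm (x i) = 1" and x: "attains_norm_at k T x"
    and ijl: "i < k" "j < k" "l < k" and ji: "x j \<notin> span {x i}"
  shows "x l \<in> span {x i, x j}"
proof (cases "l = i \<or> l = j")
  case True
  then show ?thesis
    by (auto intro: span_base)
next
  case False
  have "i \<noteq> j"
    using ji by (auto intro: span_base)
  then interpret contractive_symmetric_trilinear "\<lambda>u v t. T (x(i := u, j := v, l := t)) / T x"
    using attains_norm_at_slice_contractive[OF k T sym cont unit x ijl] False by auto
  have "T (x(i := x i, j := x j, l := x l)) / T x = 1"
    using attains_norm_at_nonzero[OF k T cont nonzero x] by simp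
  from norming_triple_in_span[OF _ _ _ this ji] unit ijl show ?thesis
    by simp
qed

lemma dim_span_image_le_2:
  fixes x :: "nat \<Rightarrow> 'a::real_vector"
  assumes "\<And>i j l. i < k \<Longrightarrow> j < k \<Longrightarrow> l < k \<Longrightarrow> x j \<notin> span {x i} \<Longrightarrow> x l \<in> span {x i, x j}"
  shows "dim (span (x ` {..<k})) \<le> 2"
proof (cases "x ` {..<k} \<subseteq> span {x 0}")
  case True
  then have "dim (x ` {..<k}) \<le> card {x 0}"
    by (intro dim_le_card) auto
  then show ?thesis
    by simp
next
  case False
  then obtain j where "j < k" "x j \<notin> span {x 0}"
    by auto
  then have "x ` {..<k} \<subseteq> span {x 0, x j}"
    using assms[of 0 j] by auto
  then have "dim (x ` {..<k}) \<le> card {x 0, x j}"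
    by (intro dim_le_card) auto
  also have "\<dots> \<le> 2"
    by (simp add: card_insert_le_m1)
  finally show ?thesis
    by simp
qed

theorem proposition4p1:
  fixes T :: "(nat \<Rightarrow> 'a::{real_inner, complete_space}) \<Rightarrow> real"
    and x :: "nat \<Rightarrow> 'a"
    and k :: nat
  assumes "k \<ge> 1"
    and "multilinear_form k T"
    and "symmetric_form k T"
    and "continuous_on (ktuples k) T"
    and "\<exists>w\<in>ktuples k. T w \<noteq> 0"
    and "\<forall>i<k. norm (x i) = 1"
    and "attains_norm_at k T x"
  shows "dim (span (x ` {..<k})) \<le> 2"
  using attains_norm_at_in_span[OF assms] by (rule dim_span_image_le_2)

end
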